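(* Let $L$ be a Lie algebra with $Z(L)=0$ and let $I$ be an ideal of $L$. Then $\mathrm{Ann}_L(I)=0$ if and only if $\mathrm{r.ann}_{A(L)}(A_L(I))=0$.
   Context: Lie algebras over a commutative unital ring $\Phi$. $\mathrm{ad}_x(y)=[x,y]$; $A(L)$ is the associative subalgebra of $\mathrm{End}_\Phi(L)$ generated by $\{\mathrm{ad}_x:x\in L\}$, and $A_L(I)$ is its subalgebra generated by $\{\mathrm{ad}_x:x\in I\}$. $\mathrm{Ann}_L(X)=\{a\in L:[a,x]=0\ \forall x\in X\}$, $Z(L)=\mathrm{Ann}_L(L)$. For an associative algebra $B$ and $X\subseteq B$, $\mathrm{r.ann}_B(X)=\{b\in B: Xb=0\}$. *)

theory Defs
  imports Main "HOL.Modules"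
begin

definition lie_algebra :: "('r::comm_ring_1 \<Rightarrow> 'l::ab_group_add \<Rightarrow> 'l) \<Rightarrow> ('l \<Rightarrow> 'l \<Rightarrow> 'l) \<Rightarrow> bool" where
  "lie_algebra scale br \<longleftrightarrow> module scale \<and>
     (\<forall>x y z. br (x + y) z = br x z + br y z) \<and>
     (\<forall>x y z. br x (y + z) = br x y + br x z) \<and>
     (\<forall>c x y. br (scale c x) y = scale c (br x y)) \<and>
     (\<forall>c x y. br x (scale c y) = scale c (br x y)) \<and>
     (\<forall>x. br x x = 0) \<and>
     (\<forall>x y z. br x (br y z) + br y (br z x) + br z (br x y) = 0)"

definition lie_ideal :: "('r::comm_ring_1 \<Rightarrow> 'l::ab_group_add \<Rightarrow> 'l) \<Rightarrow> ('l \<Rightarrow> 'l \<Rightarrow> 'l) \<Rightarrow> 'l set \<Rightarrow> bool" where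
  "lie_ideal scale br I \<longleftrightarrow> 0 \<in> I \<and> (\<forall>x\<in>I. \<forall>y\<in>I. x + y \<in> I) \<and>
     (\<forall>c. \<forall>x\<in>I. scale c x \<in> I) \<and> (\<forall>a. \<forall>x\<in>I. br a x \<in> I)"

definition ad :: "('l \<Rightarrow> 'l \<Rightarrow> 'l) \<Rightarrow> 'l \<Rightarrow> 'l \<Rightarrow> 'l" where
  "ad br x = (\<lambda>y. br x y)"

definition lie_ann :: "('l \<Rightarrow> 'l \<Rightarrow> 'l::zero) \<Rightarrow> 'l set \<Rightarrow> 'l set" where
  "lie_ann br X = {a. \<forall>x\<in>X. br a x = 0}"

definition lie_center :: "('l \<Rightarrow> 'l \<Rightarrow> 'l::zero) \<Rightarrow> 'l set" where
  "lie_center br = lie_ann br UNIV"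

text \<open>The (non-unital) associative subalgebra of End(L) generated by a set S of
  endomorphisms: closed under zero, pointwise addition, scalar multiples and composition
  (product f g = f o g).\<close>
inductive_set gen_assoc_alg :: "('r::comm_ring_1 \<Rightarrow> 'l::ab_group_add \<Rightarrow> 'l) \<Rightarrow> ('l \<Rightarrow> 'l) set \<Rightarrow> ('l \<Rightarrow> 'l) set"
  for scale :: "'r \<Rightarrow> 'l \<Rightarrow> 'l" and S :: "('l \<Rightarrow> 'l) set" where
  gen: "f \<in> S \<Longrightarrow> f \<in> gen_assoc_alg scale S"
| zero: "(\<lambda>_. 0) \<in> gen_assoc_alg scale S"
| add: "f \<in> gen_assoc_alg scale S \<Longrightarrow> g \<in> gen_assoc_alg scale S \<Longrightarrow> (\<lambda>x. f x + g x) \<in> gen_assoc_alg scale S"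
| smult: "f \<in> gen_assoc_alg scale S \<Longrightarrow> (\<lambda>x. scale c (f x)) \<in> gen_assoc_alg scale S"
| comp: "f \<in> gen_assoc_alg scale S \<Longrightarrow> g \<in> gen_assoc_alg scale S \<Longrightarrow> f \<circ> g \<in> gen_assoc_alg scale S"

definition A_L :: "('r::comm_ring_1 \<Rightarrow> 'l::ab_group_add \<Rightarrow> 'l) \<Rightarrow> ('l \<Rightarrow> 'l \<Rightarrow> 'l) \<Rightarrow> 'l set \<Rightarrow> ('l \<Rightarrow> 'l) set" where
  "A_L scale br I = gen_assoc_alg scale (ad br ` I)"

definition r_ann :: "('l \<Rightarrow> 'l::zero) set \<Rightarrow> ('l \<Rightarrow> 'l) set \<Rightarrow> ('l \<Rightarrow> 'l) set" where
  "r_ann B X = {b \<in> B. \<forall>a\<in>X. a \<circ> b = (\<lambda>_. 0)}"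

end

theory Submission
  imports Defs
begin

text \<open>An endomorphism annihilated on the left by every generator of an associative algebra is
  annihilated by the whole algebra, so the right annihilator of A(I) is that of the operators
  ad x with x in I. If [x, b y] = 0 for all x in I, then every value b y lies in Ann(I); conversely,
  for a in Ann(I) the Jacobi identity gives [x, [a, y]] = [a, [x, y]] + [[x, a], y] = 0 because
  [x, y] lies in the ideal I, so ad a is a right annihilator of A(I) and, Z(L) being zero, a = 0.\<close>

lemma lie_algebra_module: "lie_algebra scale br \<Longrightarrow> module scale"
  unfolding lie_algebra_def by blast

lemma lie_bracket_zero_right:
  assumes "lie_algebra scale br"
  shows "br x 0 = 0"
proof -
  have "br x (0 + 0) = br x 0 + br x 0"
    using assms unfolding lie_algebra_def by blast
  then show ?thesis by simp
qed

lemma lie_bracket_zero_left: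
  assumes "lie_algebra scale br"
  shows "br 0 x = 0"
proof -
  have "br (0 + 0) x = br 0 x + br 0 x"
    using assms unfolding lie_algebra_def by blast
  then show ?thesis by simp
qed

lemma lie_bracket_anticomm:
  assumes "lie_algebra scale br"
  shows "br x y = - br y x"
proof -
  have addl: "\<And>x y z. br (x + y) z = br x z + br y z"
    and addr: "\<And>x y z. br x (y + z) = br x y + br x z"
    and alt: "\<And>x. br x x = 0"
    using assms unfolding lie_algebra_def by blast+
  have "0 = br (x + y) (x + y)" by (rule alt[symmetric])
  also have "\<dots> = br x x + br x y + (br y x + br y y)" by (simp add: addl addr)
  also have "\<dots> = br x y + br y x" by (simp add: alt)
  finally show ?thesis by (simp add: eq_neg_iff_add_eq_0)
qed

lemma lie_bracket_eq_0_commute: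
  "lie_algebra scale br \<Longrightarrow> br x y = 0 \<longleftrightarrow> br y x = 0"
  by (metis lie_bracket_anticomm neg_equal_0_iff_equal)

lemma zero_in_lie_ann: "lie_algebra scale br \<Longrightarrow> 0 \<in> lie_ann br X"
  by (simp add: lie_ann_def lie_bracket_zero_left)

lemma gen_assoc_alg_apply_zero:
  assumes "module scale" and "\<And>g. g \<in> S \<Longrightarrow> g 0 = 0" and "f \<in> gen_assoc_alg scale S"
  shows "f 0 = 0"
  using assms(3)
proof (induction rule: gen_assoc_alg.induct)
  case (smult f c)
  then show ?case using module.scale_zero_right[OF assms(1)] by simp
qed (auto simp: assms(2))

lemma gen_assoc_alg_comp_eq_zero:
  assumes "module scale" and "\<And>g. g \<in> S \<Longrightarrow> g 0 = 0"
    and "\<And>g. g \<in> S \<Longrightarrow> g \<circ> b = (\<lambda>_. 0)" and "f \<in> gen_assoc_alg scale S"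
  shows "f \<circ> b = (\<lambda>_. 0)"
  using assms(4)
proof (induction rule: gen_assoc_alg.induct)
  case (gen f)
  then show ?case using assms(3) by simp
next
  case zero
  then show ?case by (simp add: comp_def)
next
  case (add f g)
  then show ?case by (simp add: comp_def fun_eq_iff)
next
  case (smult f c)
  then show ?case using module.scale_zero_right[OF assms(1)] by (simp add: comp_def fun_eq_iff)
next
  case (comp f g)
  have "f 0 = 0" by (rule gen_assoc_alg_apply_zero[of scale S f]) (use assms comp.hyps(1) in auto)
  then show ?case using comp.IH by (simp add: comp_def fun_eq_iff)
qed

lemma r_ann_gen_assoc_alg:
  assumes "module scale" and "\<And>g. g \<in> S \<Longrightarrow> g 0 = 0"
  shows "r_ann B (gen_assoc_alg scale S) = r_ann B S"
proof
  show "r_ann B (gen_assoc_alg scale S) \<subseteq> r_ann B S"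
    unfolding r_ann_def by (auto intro: gen_assoc_alg.gen)
  show "r_ann B S \<subseteq> r_ann B (gen_assoc_alg scale S)"
    unfolding r_ann_def using gen_assoc_alg_comp_eq_zero[of scale S] assms by blast
qed

lemma r_ann_A_L_eq:
  assumes "lie_algebra scale br"
  shows "r_ann B (A_L scale br I) = r_ann B (ad br ` I)"
  unfolding A_L_def
  by (rule r_ann_gen_assoc_alg)
    (auto simp: ad_def lie_algebra_module[OF assms] lie_bracket_zero_right[OF assms])

lemma lie_ann_values_of_r_ann_ad:
  assumes "lie_algebra scale br" and "b \<in> r_ann B (ad br ` I)"
  shows "b y \<in> lie_ann br I"
proof -
  have "br x (b y) = 0" if "x \<in> I" for x
  proof -
    have "ad br x \<circ> b = (\<lambda>_. 0)" using assms(2) that unfolding r_ann_def by blast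
    then show ?thesis by (simp add: ad_def comp_def fun_eq_iff)
  qed
  then show ?thesis
    unfolding lie_ann_def using lie_bracket_eq_0_commute[OF assms(1)] by blast
qed

lemma ad_comp_ad_lie_ann:
  assumes "lie_algebra scale br" and "lie_ideal scale br I"
    and "x \<in> I" and "a \<in> lie_ann br I"
  shows "ad br x \<circ> ad br a = (\<lambda>_. 0)"
proof -
  have ann: "\<And>z. z \<in> I \<Longrightarrow> br a z = 0" using assms(4) unfolding lie_ann_def by blast
  have "br x (br a y) = 0" for y
  proof -
    have "br y x \<in> I" using assms(2,3) unfolding lie_ideal_def by blast
    then have "br a (br y x) = 0" by (rule ann)
    moreover have "br x a = 0"
      using ann[OF assms(3)] lie_bracket_eq_0_commute[OF assms(1)] by blast
    moreover have "br x (br a y) + br a (br y x) + br y (br x a) = 0"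
      using assms(1) unfolding lie_algebra_def by blast
    ultimately show ?thesis by (simp add: lie_bracket_zero_right[OF assms(1)])
  qed
  then show ?thesis by (simp add: ad_def comp_def fun_eq_iff)
qed

lemma ad_lie_ann_in_r_ann:
  assumes "lie_algebra scale br" and "lie_ideal scale br I" and "a \<in> lie_ann br I"
  shows "ad br a \<in> r_ann (A_L scale br UNIV) (ad br ` I)"
  using ad_comp_ad_lie_ann[OF assms(1,2) _ assms(3)]
  unfolding r_ann_def A_L_def by (auto intro: gen_assoc_alg.gen)

lemma ad_eq_zero_iff_in_lie_center: "ad br a = (\<lambda>_. 0) \<longleftrightarrow> a \<in> lie_center br"
  by (simp add: ad_def lie_center_def lie_ann_def fun_eq_iff)

theorem mainTheorem9:
  fixes scale :: "'r::comm_ring_1 \<Rightarrow> 'l::ab_group_add \<Rightarrow> 'l"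
    and br :: "'l \<Rightarrow> 'l \<Rightarrow> 'l"
    and I :: "'l set"
  assumes "lie_algebra scale br"
    and "lie_center br = {0}"
    and "lie_ideal scale br I"
  shows "lie_ann br I = {0} \<longleftrightarrow> r_ann (A_L scale br UNIV) (A_L scale br I) = {\<lambda>_. 0}"
proof -
  let ?R = "r_ann (A_L scale br UNIV) (ad br ` I)"
  have zero_in_R: "(\<lambda>_. 0) \<in> ?R"
    unfolding r_ann_def A_L_def
    by (auto intro: gen_assoc_alg.zero simp: ad_def comp_def lie_bracket_zero_right[OF assms(1)])
  have "lie_ann br I = {0} \<longleftrightarrow> ?R = {\<lambda>_. 0}"
  proof
    assume "lie_ann br I = {0}"
    then have "b = (\<lambda>_. 0)" if "b \<in> ?R" for b
      using lie_ann_values_of_r_ann_ad[OF assms(1) that] by (auto simp: fun_eq_iff)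
    then show "?R = {\<lambda>_. 0}" using zero_in_R by blast
  next
    assume "?R = {\<lambda>_. 0}"
    then have "a \<in> lie_center br" if "a \<in> lie_ann br I" for a
      using ad_lie_ann_in_r_ann[OF assms(1,3) that] ad_eq_zero_iff_in_lie_center by blast
    then show "lie_ann br I = {0}" using assms(2) zero_in_lie_ann[OF assms(1)] by blast
  qed
  then show ?thesis by (simp add: r_ann_A_L_eq[OF assms(1)])
qed

end
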